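(* Let $K,D,U$ be integers with $0\le U\le D$ and $U+D\le K-2$, and let $\mathbb{F}_q$ be any finite field. Consider the two-sided single unicast index coding problem with symmetric neighboring and consecutive side-information with $K$ messages $x_0,\dots,x_{K-1}$ and $K$ receivers $R_0,\dots,R_{K-1}$, where $R_k$ wants $x_k$ and has side-information $$\mathcal{K}_k=\{x_{k-U},\dots,x_{k-1}\}\cup\{x_{k+1},\dots,x_{k+D}\}$$ (indices modulo $K$). Let $$a=\gcd(K,\,D-U,\,U+1),\qquad u_a=\frac{U+1}{a},\qquad \Delta_a=\frac{D-U}{a},\qquad K_a=\frac{K}{a}.$$ Let each message be a vector $x_k=(x_{k,1},\dots,x_{k,u_a})\in\mathbb{F}_q^{u_a}$. For $s\in[0:K_a-1]$ define $$y_s=\sum_{i=1}^{u_a}\sum_{j=0}^{a-1}x_{a(s+1-i)+j,\,i}\in\mathbb{F}_q$$ (first subscripts modulo $K$). Let $\mathbf{L}$ be the AIR matrix of size $K_a\times(K_a-\Delta_a)$ and $L_s$ its $s$-th row ($s\in[0:K_a-1]$). Then the code $$[c_0~c_1~\cdots~c_{K_a-\Delta_a-1}]=\sum_{s=0}^{K_a-1}y_sL_s$$ is an optimal length $u_a$-dimensional vector linear index code for this problem: every receiver $R_k$ can decode its wanted message vector $x_k$ from the $K_a-\Delta_a$ broadcast symbols $c_0,\dots,c_{K_a-\Delta_a-1}$ and its side-information, and the code achieves rate $\frac{u_a}{K_a-\Delta_a}=\frac{U+1}{K-D+U}$, which equals the symmetric capacity of the problem.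
   Context: Index coding: a transmitter holds messages $x_0,\dots,x_{K-1}$, each $x_k\in\mathbb{F}_q^{p}$ (a $p$-dimensional vector index code; $p=1$ is scalar). A linear index code of length $N$ is an $\mathbb{F}_q$-linear map $\mathbb{F}_q^{pK}\to\mathbb{F}_q^{N}$; its image symbols $c_0,\dots,c_{N-1}$ are broadcast over a noiseless channel. Receiver $R_k$ decodes if $x_k$ is determined (linearly) by the broadcast symbols together with the messages in its side-information set $\mathcal{K}_k$. The rate is $p/N$. For the problem above with $U+D\le K-2$, the symmetric capacity is $\frac{U+1}{K-D+U}$ symbols per message, and an index code is of optimal length if its rate equals this capacity. AIR matrix: for integers $m\ge n\ge 1$, the $m\times n$ binary matrix $\mathbf{L}_{m\times n}$ (entries $0,1$ regarded in $\mathbb{F}_q$) is built as follows. For $d\mid c$, let $\mathbf{I}_{c\times d}$ be the $c\times d$ matrix consisting of $c/d$ copies of the identity $\mathbf{I}_d$ stacked vertically, and $\mathbf{I}_{d\times c}$ its transpose. Start with an empty $m\times n$ matrix whose "unfilled part" is the whole matrix, of size $m\times n$. Step 1: write $m=qn+r$ with $0\le r<n$; fill the first $qn$ rows of the unfilled part with $\mathbf{I}_{qn\times n}$; the unfilled part is now its last $r$ rows (size $r\times n$); if $r=0$ stop. Step 2: write $n=q'r+r'$ with $0\le r'<r$; fill the first $q'r$ columns of the unfilled part with $\mathbf{I}_{r\times q'r}$ (i.e. $q'$ copies of $\mathbf{I}_r$ side by side); the unfilled part is now its last $r'$ columns (size $r\times r'$); if $r'=0$ stop; otherwise set $m\leftarrow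 r$, $n\leftarrow r'$ and return to Step 1. The resulting matrix is the AIR matrix of size $m\times n$. *)

theory Defs
  imports Complex_Main
begin

text \<open>AIR matrix.  air_ent m n r c is True iff entry (r,c) (0-based row r < m,
  column c < n) of the m x n AIR matrix is 1, following the recursive
  construction (Step 1: stacked identities I_n in the first (m div n)*n rows;
  Step 2: side-by-side identities I_rr in the first ((n div rr)*rr) columns of
  the remaining rr = m mod n rows; then recurse on the rr x (n mod rr) block).\<close>

function air_ent :: "nat \<Rightarrow> nat \<Rightarrow> nat \<Rightarrow> nat \<Rightarrow> bool" where
  "air_ent m n r c =
     (if n = 0 \<or> r \<ge> m \<or> c \<ge> n then False
      else if r < (m div n) * n then r mod n = c
      else (let rr = m mod n; r' = r - (m div n) * n in
            if rr = 0 then False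
            else if c < (n div rr) * rr then c mod rr = r'
            else air_ent rr (n mod rr) r' (c - (n div rr) * rr)))"
  by pat_completeness auto
lemma air_term_aux:
  fixes m n :: nat
  assumes "0 < n" "m mod n \<noteq> 0"
  shows "m mod n + n mod (m mod n) < m + n"
proof -
  have "m mod n < n" "n mod (m mod n) < m mod n" "m mod n \<le> m" using assms by auto
  then show ?thesis by linarith
qed

termination
  by (relation "measure (\<lambda>(m,n,r,c). m + n)")
     (auto simp: Let_def intro!: air_term_aux)

definition AIR :: "nat \<Rightarrow> nat \<Rightarrow> nat \<Rightarrow> nat \<Rightarrow> 'a::field" where
  "AIR m n r c = (if air_ent m n r c then 1 else 0)"

definition par_a :: "nat \<Rightarrow> nat \<Rightarrow> nat \<Rightarrow> nat" where
  "par_a K D U = gcd K (gcd (D - U) (U + 1))"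

definition u_a :: "nat \<Rightarrow> nat \<Rightarrow> nat \<Rightarrow> nat" where
  "u_a K D U = (U + 1) div par_a K D U"
definition Delta_a :: "nat \<Rightarrow> nat \<Rightarrow> nat \<Rightarrow> nat" where
  "Delta_a K D U = (D - U) div par_a K D U"
definition K_a :: "nat \<Rightarrow> nat \<Rightarrow> nat \<Rightarrow> nat" where
  "K_a K D U = K div par_a K D U"

definition side_info :: "nat \<Rightarrow> nat \<Rightarrow> nat \<Rightarrow> nat \<Rightarrow> nat set" where
  "side_info K D U k =
     {nat ((int k - int t) mod int K) | t. 1 \<le> t \<and> t \<le> U} \<union>
     {(k + t) mod K | t. 1 \<le> t \<and> t \<le> D}"

text \<open>Messages: x k i is the i-th component (i in 1..u_a) of message x_k (k < K).
  y_s = sum_{i=1}^{u_a} sum_{j=0}^{a-1} x_{a(s+1-i)+j, i}, first index mod K.\<close>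
definition y_sym :: "nat \<Rightarrow> nat \<Rightarrow> nat \<Rightarrow> (nat \<Rightarrow> nat \<Rightarrow> 'a::field) \<Rightarrow> nat \<Rightarrow> 'a" where
  "y_sym K D U x s =
     (\<Sum>i\<in>{1..u_a K D U}. \<Sum>j<par_a K D U.
        x (nat ((int (par_a K D U) * (int s + 1 - int i) + int j) mod int K)) i)"

definition code_sym :: "nat \<Rightarrow> nat \<Rightarrow> nat \<Rightarrow> (nat \<Rightarrow> nat \<Rightarrow> 'a::field) \<Rightarrow> nat \<Rightarrow> 'a" where
  "code_sym K D U x t =
     (\<Sum>s<K_a K D U. y_sym K D U x s *
        AIR (K_a K D U) (K_a K D U - Delta_a K D U) s t)"

definition lin_decodable ::
  "'a::field itself \<Rightarrow> nat \<Rightarrow> nat \<Rightarrow> nat \<Rightarrow> nat \<Rightarrow> bool" where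
  "lin_decodable _ K D U k \<longleftrightarrow>
     (\<forall>i\<in>{1..u_a K D U}. \<exists>(\<alpha>::nat \<Rightarrow> 'a) (\<beta>::nat \<Rightarrow> nat \<Rightarrow> 'a).
        \<forall>x::nat \<Rightarrow> nat \<Rightarrow> 'a. x k i =
          (\<Sum>t<K_a K D U - Delta_a K D U. \<alpha> t * code_sym K D U x t) +
          (\<Sum>j\<in>side_info K D U k. \<Sum>l\<in>{1..u_a K D U}. \<beta> j l * x j l))"

end

(*
  Let a = gcd(K, D - U, U + 1) and write K = a m, D - U = a Delta, U + 1 = a u, n = m - Delta.
  The key property of the m x n AIR matrix is that any n cyclically consecutive rows are
  linearly independent.  It is proved by induction along the Euclidean algorithm that builds
  the matrix, simultaneously with the independence of its lower-right w x w corners.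
  Receiver k = a s + j wants the i-th component of x_k, which occurs in y_(s+i-1).  Inverting
  the n consecutive rows that end u - i rows after row s + i - 1 yields a combination of the
  code symbols equal to y_(s+i-1) plus a combination of y_(s+u), ..., y_(s+u+Delta-1).  Every
  other message symbol occurring there is some x_(k+d) with -U <= d <= D and d <> 0, i.e.
  side information of receiver k.  The rate is u/n = (U+1)/(K-D+U), as U+1 = a u, K-D+U = a n.
*)

theory Submission
  imports Defs "HOL-Library.FuncSet"
begin

section \<open>Injective blocks of a matrix\<close>

definition unit_row :: "(nat \<Rightarrow> nat \<Rightarrow> 'a::field) \<Rightarrow> nat set \<Rightarrow> nat \<Rightarrow> nat \<Rightarrow> bool" where
  "unit_row A C p c \<longleftrightarrow> (\<forall>c'\<in>C. A p c' = (if c' = c then 1 else 0))"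

definition block_inj :: "(nat \<Rightarrow> nat \<Rightarrow> 'a::field) \<Rightarrow> nat set \<Rightarrow> nat set \<Rightarrow> bool" where
  "block_inj A W C \<longleftrightarrow> (\<forall>\<alpha>. (\<forall>p\<in>W. (\<Sum>c\<in>C. A p c * \<alpha> c) = 0) \<longrightarrow> (\<forall>c\<in>C. \<alpha> c = 0))"

lemma block_inj_empty [simp]: "block_inj A W {}"
  by (simp add: block_inj_def)

lemma kernel_vanishes_at_unit_row:
  assumes ker: "\<forall>p\<in>W. (\<Sum>c\<in>C. A p c * \<alpha> c) = 0"
    and "p \<in> W" "unit_row A C p c" "finite C" "c \<in> C"
  shows "\<alpha> c = 0"
proof -
  have "(\<Sum>c'\<in>C. A p c' * \<alpha> c') = (\<Sum>c'\<in>C. if c' = c then \<alpha> c' else 0)"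
    using \<open>unit_row A C p c\<close> unfolding unit_row_def by (intro sum.cong) auto
  then show ?thesis
    using ker \<open>p \<in> W\<close> \<open>finite C\<close> \<open>c \<in> C\<close> by simp
qed

lemma block_inj_unit_rows:
  assumes "finite C" "\<forall>c\<in>C. \<exists>p\<in>W. unit_row A C p c"
  shows "block_inj A W C"
  unfolding block_inj_def
proof (intro allI impI ballI)
  fix \<alpha> c assume ker: "\<forall>p\<in>W. (\<Sum>c\<in>C. A p c * \<alpha> c) = 0" and "c \<in> C"
  then obtain p where "p \<in> W" "unit_row A C p c"
    using assms(2) by blast
  then show "\<alpha> c = 0"
    using kernel_vanishes_at_unit_row[OF ker] assms(1) \<open>c \<in> C\<close> by blast
qed

lemma block_inj_eliminate_unit_rows:
  assumes "finite C" "R \<subseteq> C" "\<forall>c\<in>R. \<exists>p\<in>W. unit_row A C p c"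
    and "W' \<subseteq> W" "block_inj A W' (C - R)"
  shows "block_inj A W C"
  unfolding block_inj_def
proof (intro allI impI)
  fix \<alpha> assume ker: "\<forall>p\<in>W. (\<Sum>c\<in>C. A p c * \<alpha> c) = 0"
  have R: "\<forall>c\<in>R. \<alpha> c = 0"
    using kernel_vanishes_at_unit_row[OF ker] assms(1-3) by blast
  have "(\<Sum>c\<in>C - R. A p c * \<alpha> c) = 0" if "p \<in> W'" for p
  proof -
    have "(\<Sum>c\<in>C. A p c * \<alpha> c) = (\<Sum>c\<in>C - R. A p c * \<alpha> c) + (\<Sum>c\<in>R. A p c * \<alpha> c)"
      using sum.subset_diff[OF assms(2,1)] by simp
    then show ?thesis
      using R ker that assms(4) by auto
  qed
  then have "\<forall>c\<in>C - R. \<alpha> c = 0"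
    using assms(5) unfolding block_inj_def by blast
  with R show "\<forall>c\<in>C. \<alpha> c = 0" by blast
qed

lemma block_inj_triangular:
  assumes "finite C1" "finite C2" "C1 \<inter> C2 = {}" "W' \<subseteq> W"
    and "\<forall>p\<in>W'. \<forall>c\<in>C1. A p c = 0" "block_inj A W' C2"
    and "\<forall>c\<in>C1. \<exists>p\<in>W. unit_row A C1 p c"
  shows "block_inj A W (C1 \<union> C2)"
  unfolding block_inj_def
proof (intro allI impI)
  fix \<alpha> assume ker: "\<forall>p\<in>W. (\<Sum>c\<in>C1 \<union> C2. A p c * \<alpha> c) = 0"
  have split: "(\<Sum>c\<in>C1 \<union> C2. A p c * \<alpha> c) = (\<Sum>c\<in>C1. A p c * \<alpha> c) + (\<Sum>c\<in>C2. A p c * \<alpha> c)" for p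
    using assms(1-3) by (simp add: sum.union_disjoint)
  have "\<forall>p\<in>W'. (\<Sum>c\<in>C2. A p c * \<alpha> c) = 0"
  proof
    fix p assume "p \<in> W'"
    then have "(\<Sum>c\<in>C1. A p c * \<alpha> c) = 0"
      using assms(5) by simp
    then show "(\<Sum>c\<in>C2. A p c * \<alpha> c) = 0"
      using ker split[of p] \<open>p \<in> W'\<close> assms(4) by auto
  qed
  then have C2: "\<forall>c\<in>C2. \<alpha> c = 0"
    using assms(6) unfolding block_inj_def by blast
  then have ker1: "\<forall>p\<in>W. (\<Sum>c\<in>C1. A p c * \<alpha> c) = 0"
    using ker split by simp
  have "\<forall>c\<in>C1. \<alpha> c = 0"
    using kernel_vanishes_at_unit_row[OF ker1] assms(1,7) by blast
  with C2 show "\<forall>c\<in>C1 \<union> C2. \<alpha> c = 0" by blast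
qed

lemma block_inj_shift:
  assumes inj: "block_inj B {p1..<p2} {c1..<c2}"
    and shift: "\<And>p c. p \<in> {p1..<p2} \<Longrightarrow> c \<in> {c1..<c2} \<Longrightarrow> A (p + p0) (c + c0) = B p c"
  shows "block_inj A {p1 + p0..<p2 + p0} {c1 + c0..<c2 + c0}"
  unfolding block_inj_def
proof (intro allI impI ballI)
  fix \<alpha> c assume ker: "\<forall>p\<in>{p1 + p0..<p2 + p0}. (\<Sum>c\<in>{c1 + c0..<c2 + c0}. A p c * \<alpha> c) = 0"
    and c: "c \<in> {c1 + c0..<c2 + c0}"
  have "(\<Sum>c\<in>{c1..<c2}. B p c * \<alpha> (c + c0)) = 0" if "p \<in> {p1..<p2}" for p
  proof -
    have "(\<Sum>c\<in>{c1..<c2}. B p c * \<alpha> (c + c0)) = (\<Sum>c\<in>{c1..<c2}. A (p + p0) (c + c0) * \<alpha> (c + c0))"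
      using shift that by simp
    also have "\<dots> = (\<Sum>c\<in>{c1 + c0..<c2 + c0}. A (p + p0) c * \<alpha> c)"
      by (simp add: sum.shift_bounds_nat_ivl)
    finally show ?thesis
      using ker that by simp
  qed
  then have "\<forall>c\<in>{c1..<c2}. \<alpha> (c + c0) = 0"
    using inj[unfolded block_inj_def, THEN spec[of _ "\<lambda>c. \<alpha> (c + c0)"]] by blast
  moreover have "c - c0 \<in> {c1..<c2}" "c - c0 + c0 = c"
    using c by auto
  ultimately show "\<alpha> c = 0"
    by metis
qed

text \<open>Over a finite field an injective square system is surjective, by counting.\<close>

lemma block_inj_solvable:
  fixes A :: "nat \<Rightarrow> nat \<Rightarrow> 'a::{field,finite}"
  assumes inj: "block_inj A W C" and "finite C" "finite W" "card W = card C"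
  shows "\<exists>\<alpha>. \<forall>p\<in>W. (\<Sum>c\<in>C. A p c * \<alpha> c) = z p"
proof -
  define \<Phi> where "\<Phi> \<alpha> = restrict (\<lambda>p. \<Sum>c\<in>C. A p c * \<alpha> c) W" for \<alpha>
  let ?S = "PiE C (\<lambda>_. UNIV :: 'a set)"
  let ?T = "PiE W (\<lambda>_. UNIV :: 'a set)"
  have "inj_on \<Phi> ?S"
  proof (rule inj_onI)
    fix \<alpha> \<beta> assume "\<alpha> \<in> ?S" "\<beta> \<in> ?S" and eq: "\<Phi> \<alpha> = \<Phi> \<beta>"
    have "\<forall>p\<in>W. (\<Sum>c\<in>C. A p c * (\<alpha> c - \<beta> c)) = 0"
    proof
      fix p assume "p \<in> W"
      then have "(\<Sum>c\<in>C. A p c * \<alpha> c) = (\<Sum>c\<in>C. A p c * \<beta> c)"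
        using fun_cong[OF eq, of p] unfolding \<Phi>_def by simp
      then show "(\<Sum>c\<in>C. A p c * (\<alpha> c - \<beta> c)) = 0"
        by (simp add: right_diff_distrib sum_subtractf)
    qed
    then have "\<forall>c\<in>C. \<alpha> c - \<beta> c = 0"
      using inj[unfolded block_inj_def, THEN spec[of _ "\<lambda>c. \<alpha> c - \<beta> c"]] by blast
    then show "\<alpha> = \<beta>"
      using \<open>\<alpha> \<in> ?S\<close> \<open>\<beta> \<in> ?S\<close> by (intro PiE_ext) auto
  qed
  then have "card (\<Phi> ` ?S) = card ?T"
    using assms(2-4) by (simp add: card_image card_PiE)
  moreover have "\<Phi> ` ?S \<subseteq> ?T"
    unfolding \<Phi>_def by auto
  ultimately have "\<Phi> ` ?S = ?T"
    using card_subset_eq \<open>finite W\<close> by (metis finite_PiE finite)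
  moreover have "restrict z W \<in> ?T" by simp
  ultimately obtain \<alpha> where "\<Phi> \<alpha> = restrict z W"
    by (metis imageE)
  then show ?thesis
    unfolding \<Phi>_def by (metis restrict_apply')
qed

section \<open>Modular arithmetic and cyclic windows\<close>

lemma mod_eq_imp_eq_in_interval:
  fixes r :: nat
  assumes "f \<le> c" "c < f + r" "f \<le> c'" "c' < f + r" "c mod r = c' mod r"
  shows "c = c'"
proof -
  have eq: "x = y" if "f \<le> x" "x \<le> y" "y < f + r" "x mod r = y mod r" for x y
  proof (rule ccontr)
    assume "x \<noteq> y"
    have "r dvd y - x"
      using that mod_eq_dvd_iff_nat[of x y r] by simp
    then have "r \<le> y - x"
      using \<open>x \<noteq> y\<close> that(2) by (simp add: dvd_imp_le)
    then show False
      using that by linarith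
  qed
  show ?thesis
    using eq[of c c'] eq[of c' c] assms by (cases "c \<le> c'") auto
qed

lemma mod_last_block:
  fixes c q r :: nat
  assumes "1 \<le> q" "q * r \<le> c + r" "c < q * r"
  shows "c mod r = c + r - q * r"
proof -
  obtain q' where q: "q = Suc q'"
    using assms(1) by (cases q) auto
  then have "c = q' * r + (c + r - q * r)" "c + r - q * r < r"
    using assms(2,3) by auto
  then have "c mod r = (c + r - q * r) mod r"
    by (metis mod_mult_self3)
  then show ?thesis
    using \<open>c + r - q * r < r\<close> by simp
qed

lemma last_upper_row:
  fixes n c Q :: nat
  assumes "c < n" "1 \<le> Q"
  shows "(Q * n - n + c) mod n = c" "Q * n - n + c < Q * n"
proof -
  obtain Q' where "Q = Suc Q'"
    using assms(2) by (cases Q) auto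
  then show "(Q * n - n + c) mod n = c" "Q * n - n + c < Q * n"
    using assms(1) by simp_all
qed

lemma add_mod_offset:
  fixes n c j :: nat
  assumes "c < n"
  shows "(j + (c + n - j mod n) mod n) mod n = c"
proof -
  have "j mod n < n"
    using assms by simp
  then have "j mod n + (c + n - j mod n) = c + n"
    by linarith
  then have "(j mod n + (c + n - j mod n)) mod n = c"
    using assms by simp
  then show ?thesis
    by (simp add: mod_add_left_eq mod_add_right_eq)
qed

definition cyc_window :: "nat \<Rightarrow> nat \<Rightarrow> nat \<Rightarrow> nat set" where
  "cyc_window m j n = (\<lambda>\<tau>. (j + \<tau>) mod m) ` {..<n}"

lemma cyc_windowI: "j \<le> p \<Longrightarrow> p < j + n \<Longrightarrow> p < m \<Longrightarrow> p \<in> cyc_window m j n"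
  unfolding cyc_window_def by (rule image_eqI[of _ _ "p - j"]) auto

lemma cyc_window_wrapI: "j < m \<Longrightarrow> p < m \<Longrightarrow> p + m < j + n \<Longrightarrow> p \<in> cyc_window m j n"
  unfolding cyc_window_def by (rule image_eqI[of _ _ "p + m - j"]) auto

lemma card_cyc_window:
  assumes "n \<le> m"
  shows "card (cyc_window m j n) = n"
proof -
  have "inj_on (\<lambda>\<tau>. (j + \<tau>) mod m) {..<n}"
  proof (rule inj_onI)
    fix x y assume "x \<in> {..<n}" "y \<in> {..<n}" "(j + x) mod m = (j + y) mod m"
    then have "j + x = j + y"
      using assms mod_eq_imp_eq_in_interval[of j "j + x" m "j + y"] by auto
    then show "x = y" by simp
  qed
  then show ?thesis
    unfolding cyc_window_def by (simp add: card_image)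
qed

lemma cyc_window_or_after:
  assumes "s < m" "n \<le> m"
  shows "s \<in> cyc_window m j n \<or> (\<exists>\<mu><m - n. s = (j + n + \<mu>) mod m)"
proof -
  define \<tau> where "\<tau> = (s + m - j mod m) mod m"
  have "\<tau> < m" "(j + \<tau>) mod m = s"
    using add_mod_offset[OF assms(1), of j] assms(1) unfolding \<tau>_def by auto
  show ?thesis
  proof (cases "\<tau> < n")
    case True
    then show ?thesis
      using \<open>(j + \<tau>) mod m = s\<close> unfolding cyc_window_def by blast
  next
    case False
    then have "j + \<tau> = j + n + (\<tau> - n)" "\<tau> - n < m - n"
      using \<open>\<tau> < m\<close> by auto
    then show ?thesis
      using \<open>(j + \<tau>) mod m = s\<close> by metis
  qed
qed

section \<open>Cyclic windows of the AIR matrix are independent\<close>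

definition corners_inj :: "(nat \<Rightarrow> nat \<Rightarrow> 'a::field) \<Rightarrow> nat \<Rightarrow> nat \<Rightarrow> bool" where
  "corners_inj A m n \<longleftrightarrow> (\<forall>w\<le>n. block_inj A {m - w..<m} {n - w..<n})"

definition windows_inj :: "(nat \<Rightarrow> nat \<Rightarrow> 'a::field) \<Rightarrow> nat \<Rightarrow> nat \<Rightarrow> bool" where
  "windows_inj A m n \<longleftrightarrow> (\<forall>j<m. block_inj A (cyc_window m j n) {..<n})"

lemma AIR_upper:
  assumes "0 < n" "p < m div n * n" "c < n"
  shows "AIR m n p c = (if p mod n = c then 1 else 0)"
proof -
  have "p < m"
    using assms(2) div_times_less_eq_dividend[of m n] by linarith
  then show ?thesis
    unfolding AIR_def using assms by (subst air_ent.simps) auto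
qed

lemma unit_row_AIR_upper:
  assumes "0 < n" "p < m div n * n" "C \<subseteq> {..<n}"
  shows "unit_row (AIR m n) C p (p mod n)"
  unfolding unit_row_def
proof
  fix c assume "c \<in> C"
  then have "c < n"
    using assms(3) by auto
  then show "AIR m n p c = (if c = p mod n then 1 else 0)"
    using AIR_upper[OF assms(1,2) \<open>c < n\<close>] by auto
qed

lemma AIR_corners_inj_dvd:
  assumes "0 < n" "m = Q * n" "1 \<le> Q"
  shows "corners_inj (AIR m n) m n"
  unfolding corners_inj_def
proof (intro allI impI)
  fix w assume "w \<le> n"
  show "block_inj (AIR m n) {m - w..<m} {n - w..<n}"
  proof (rule block_inj_unit_rows)
    show "\<forall>c\<in>{n - w..<n}. \<exists>p\<in>{m - w..<m}. unit_row (AIR m n) {n - w..<n} p c"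
    proof
      fix c assume c: "c \<in> {n - w..<n}"
      have "n \<le> Q * n"
        using assms(3) by simp
      then have "Q * n - n + c \<in> {m - w..<m}" "(Q * n - n + c) mod n = c"
        using c \<open>w \<le> n\<close> last_upper_row[of c n Q] assms by auto
      moreover have "Q * n - n + c < m div n * n" "{n - w..<n} \<subseteq> {..<n}"
        using last_upper_row[of c n Q] c assms by auto
      then have "unit_row (AIR m n) {n - w..<n} (Q * n - n + c) ((Q * n - n + c) mod n)"
        by (rule unit_row_AIR_upper[OF assms(1)])
      ultimately show "\<exists>p\<in>{m - w..<m}. unit_row (AIR m n) {n - w..<n} p c"
        by auto
    qed
  qed simp
qed

lemma AIR_windows_inj_dvd:
  assumes "0 < n" "m = Q * n"
  shows "windows_inj (AIR m n) m n"
  unfolding windows_inj_def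
proof (intro allI impI)
  fix j assume "j < m"
  show "block_inj (AIR m n) (cyc_window m j n) {..<n}"
  proof (rule block_inj_unit_rows)
    show "\<forall>c\<in>{..<n}. \<exists>p\<in>cyc_window m j n. unit_row (AIR m n) {..<n} p c"
    proof
      fix c assume "c \<in> {..<n}"
      define p where "p = (j + (c + n - j mod n) mod n) mod m"
      have "p mod n = c"
        using add_mod_offset[of c n j] \<open>c \<in> {..<n}\<close> assms(2) by (simp add: p_def mod_mod_cancel)
      moreover have "p \<in> cyc_window m j n" "p < m"
        using assms(1) \<open>j < m\<close> unfolding cyc_window_def p_def
        by (auto intro!: image_eqI[of _ _ "(c + n - j mod n) mod n"])
      moreover have "p < m div n * n"
        using \<open>p < m\<close> assms by simp
      then have "unit_row (AIR m n) {..<n} p (p mod n)"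
        by (rule unit_row_AIR_upper[OF assms(1)]) simp
      ultimately show "\<exists>p\<in>cyc_window m j n. unit_row (AIR m n) {..<n} p c"
        by auto
    qed
  qed simp
qed

text \<open>The first two steps of the construction when \<open>r = m mod n \<noteq> 0\<close>: the upper
  \<open>Q n\<close> rows are stacked copies of \<open>I\<^sub>n\<close>, the lower \<open>r\<close> rows are
  \<open>I\<^sub>r \<cdots> I\<^sub>r\<close> followed by the AIR matrix of size \<open>r \<times> r'\<close>.\<close>

locale air_division =
  fixes m n Q r q r' :: nat
  assumes n_pos: "0 < n" and m_eq: "m = Q * n + r" and r_less: "r < n"
    and n_eq: "n = q * r + r'" and r'_less: "r' < r" and n_le_m: "n \<le> m"
begin

lemma r_pos: "0 < r"
  using r'_less by simp

lemma Q_pos: "1 \<le> Q"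
  using m_eq r_less n_le_m by (cases Q) auto

lemma q_pos: "1 \<le> q"
  using n_eq r_less r'_less by (cases q) auto

lemma n_le_Qn: "n \<le> Q * n"
  using Q_pos by simp

lemma r_le_qr: "r \<le> q * r"
  using q_pos by simp

lemma unit_row_upper:
  assumes "p < Q * n" "C \<subseteq> {..<n}"
  shows "unit_row (AIR m n) C p (p mod n)"
  using unit_row_AIR_upper[OF n_pos, of p m C] assms m_eq r_less by simp

lemma AIR_lower_left:
  assumes "b < r" "c < q * r"
  shows "AIR m n (Q * n + b) c = (if c mod r = b then 1 else 0)"
proof -
  have "c < n"
    using assms(2) n_eq by linarith
  then show ?thesis
    unfolding AIR_def using assms m_eq n_eq r_less r'_less n_pos
    by (subst air_ent.simps) (auto simp: Let_def)
qed

lemma AIR_lower_right: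
  assumes "b < r" "c < r'"
  shows "AIR m n (b + Q * n) (c + q * r) = AIR r r' b c"
  unfolding AIR_def using assms m_eq n_eq r_less r'_less n_pos
  by (subst air_ent.simps) (auto simp: Let_def)

lemma AIR_lower_left_zero:
  assumes "c < q * r" "q * r \<le> c + r" "b < c + r - q * r"
  shows "AIR m n (Q * n + b) c = 0"
proof -
  have "b < r" "c mod r \<noteq> b"
    using mod_last_block[OF q_pos assms(2,1)] assms by auto
  then show ?thesis
    using AIR_lower_left[of b c] assms(1) by simp
qed

lemma unit_row_lower_left:
  assumes "C \<subseteq> {f..<f + r}" "C \<subseteq> {..<q * r}" "c \<in> C"
  shows "unit_row (AIR m n) C (Q * n + c mod r) c"
  unfolding unit_row_def
proof
  fix c' assume "c' \<in> C"
  then have "c' \<in> {f..<f + r}" "c \<in> {f..<f + r}"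
    using assms by auto
  then have "(c' mod r = c mod r) = (c' = c)"
    using mod_eq_imp_eq_in_interval[of f c' r c] by auto
  then show "AIR m n (Q * n + c mod r) c' = (if c' = c then 1 else 0)"
    using AIR_lower_left[of "c mod r" c'] \<open>c' \<in> C\<close> assms(2) r_pos by auto
qed

lemma unit_row_lower_right:
  assumes "C \<subseteq> {q * r..<q * r + r'}" "b < r'"
  shows "unit_row (AIR m n) C (Q * n + b) (q * r + b)"
  unfolding unit_row_def
proof
  fix c assume "c \<in> C"
  then have "c \<in> {q * r..<q * r + r'}"
    using assms(1) by auto
  then have "c = q * r + (c - q * r)" "c - q * r < r'"
    by auto
  moreover have "AIR r r' b (c - q * r) = (if b = c - q * r then 1 else 0)"
    using AIR_upper[of r' b r "c - q * r"] assms(2) \<open>c - q * r < r'\<close> r'_less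
      div_times_less_eq_dividend[of r r'] by (simp add: le_div_geq not_less)
  ultimately show "AIR m n (Q * n + b) c = (if c = q * r + b then 1 else 0)"
    using AIR_lower_right[of b "c - q * r"] assms(2) r'_less
    by (metis add.commute add_left_cancel less_trans)
qed

lemma ex_unit_row_upper:
  assumes "p \<in> W" "p < Q * n" "p mod n = c" "C \<subseteq> {..<n}"
  shows "\<exists>p\<in>W. unit_row (AIR m n) C p c"
  using unit_row_upper[OF assms(2,4)] assms(1,3) by blast

lemma lower_left_block_inj:
  assumes "w \<le> r"
  shows "block_inj (AIR m n) {Q * n..<Q * n + w} {..<w}"
proof (rule block_inj_unit_rows)
  show "\<forall>c\<in>{..<w}. \<exists>p\<in>{Q * n..<Q * n + w}. unit_row (AIR m n) {..<w} p c"
  proof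
    fix c assume c: "c \<in> {..<w}"
    have "w \<le> q * r"
      using assms r_le_qr by linarith
    then have "unit_row (AIR m n) {..<w} (Q * n + c mod r) c"
      using c assms by (intro unit_row_lower_left[where f = 0]) auto
    moreover have "c mod r = c"
      using c assms by simp
    ultimately show "\<exists>p\<in>{Q * n..<Q * n + w}. unit_row (AIR m n) {..<w} p c"
      using c by (intro bexI[of _ "Q * n + c"]) auto
  qed
qed simp

lemma ex_unit_row_lower_left:
  assumes "C \<subseteq> {f..<f + r}" "C \<subseteq> {..<q * r}" "c \<in> C"
  shows "\<exists>p\<in>{Q * n..<m}. unit_row (AIR m n) C p c"
  using unit_row_lower_left[OF assms] m_eq r_pos by (intro bexI[of _ "Q * n + c mod r"]) auto

lemma lower_right_identity_block_inj:
  assumes "w \<le> r'"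
  shows "block_inj (AIR m n) {Q * n..<Q * n + w} {q * r..<q * r + w}"
proof (rule block_inj_unit_rows)
  show "\<forall>c\<in>{q * r..<q * r + w}. \<exists>p\<in>{Q * n..<Q * n + w}. unit_row (AIR m n) {q * r..<q * r + w} p c"
  proof
    fix c assume c: "c \<in> {q * r..<q * r + w}"
    then have "unit_row (AIR m n) {q * r..<q * r + w} (Q * n + (c - q * r)) (q * r + (c - q * r))"
      using assms by (intro unit_row_lower_right) auto
    then show "\<exists>p\<in>{Q * n..<Q * n + w}. unit_row (AIR m n) {q * r..<q * r + w} p c"
      using c by (intro bexI[of _ "Q * n + (c - q * r)"]) auto
  qed
qed simp

lemma lower_rows_block_inj:
  assumes "f + r \<le> n"
  shows "block_inj (AIR m n) {Q * n..<m} {f..<f + r}"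
proof (cases "f + r \<le> q * r")
  case True
  then show ?thesis
    by (intro block_inj_unit_rows ballI ex_unit_row_lower_left[where f = f]) auto
next
  case False
  define w where "w = f + r - q * r"
  have w: "w \<le> r'" "f + r = q * r + w" "f < q * r"
    using False assms n_eq r'_less unfolding w_def by linarith+
  have "{f..<f + r} = {f..<q * r} \<union> {q * r..<q * r + w}"
    using w by auto
  moreover have "block_inj (AIR m n) {Q * n..<m} ({f..<q * r} \<union> {q * r..<q * r + w})"
  proof (rule block_inj_triangular[where W' = "{Q * n..<Q * n + w}"])
    show "\<forall>p\<in>{Q * n..<Q * n + w}. \<forall>c\<in>{f..<q * r}. AIR m n p c = 0"
    proof (intro ballI)
      fix p c assume p: "p \<in> {Q * n..<Q * n + w}" and c: "c \<in> {f..<q * r}"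
      then have "AIR m n (Q * n + (p - Q * n)) c = 0"
        using w by (intro AIR_lower_left_zero) auto
      then show "AIR m n p c = 0"
        using p by simp
    qed
    show "\<forall>c\<in>{f..<q * r}. \<exists>p\<in>{Q * n..<m}. unit_row (AIR m n) {f..<q * r} p c"
      using w by (intro ballI ex_unit_row_lower_left[where f = f]) auto
  qed (use m_eq w r'_less lower_right_identity_block_inj in auto)
  ultimately show ?thesis
    by simp
qed

lemma lower_corner_small_block_inj:
  assumes "w \<le> r'" and corners: "corners_inj (AIR r r' :: nat \<Rightarrow> nat \<Rightarrow> 'a) r r'"
  shows "block_inj (AIR m n :: nat \<Rightarrow> nat \<Rightarrow> 'a::field) {m - w..<m} {n - w..<n}"
proof -
  have "block_inj (AIR r r' :: nat \<Rightarrow> nat \<Rightarrow> 'a) {r - w..<r} {r' - w..<r'}"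
    using corners assms(1) unfolding corners_inj_def by simp
  then have "block_inj (AIR m n :: nat \<Rightarrow> nat \<Rightarrow> 'a)
      {r - w + Q * n..<r + Q * n} {r' - w + q * r..<r' + q * r}"
    by (rule block_inj_shift) (simp add: AIR_lower_right)
  moreover have "r - w + Q * n = m - w" "r + Q * n = m" "r' - w + q * r = n - w" "r' + q * r = n"
    using m_eq n_eq assms(1) r'_less by auto
  ultimately show ?thesis
    by simp
qed

lemma lower_right_window_block_inj:
  assumes "r' < w" "w \<le> r" and windows: "windows_inj (AIR r r' :: nat \<Rightarrow> nat \<Rightarrow> 'a) r r'"
  shows "block_inj (AIR m n :: nat \<Rightarrow> nat \<Rightarrow> 'a::field) {m - w..<m - w + r'} {q * r..<n}"
proof -
  have "cyc_window r (r - w) r' = (\<lambda>\<tau>. \<tau> + (r - w)) ` {0..<r'}"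
    unfolding cyc_window_def lessThan_atLeast0 using assms(1,2) by (intro image_cong) auto
  moreover have "block_inj (AIR r r' :: nat \<Rightarrow> nat \<Rightarrow> 'a) (cyc_window r (r - w) r') {..<r'}"
    using windows assms(1) r_pos unfolding windows_inj_def by simp
  ultimately have "block_inj (AIR r r' :: nat \<Rightarrow> nat \<Rightarrow> 'a) {0 + (r - w)..<r' + (r - w)} {0..<r'}"
    by (simp add: lessThan_atLeast0)
  then have "block_inj (AIR m n :: nat \<Rightarrow> nat \<Rightarrow> 'a)
      {0 + (r - w) + Q * n..<r' + (r - w) + Q * n} {0 + q * r..<r' + q * r}"
  proof (rule block_inj_shift)
    fix p c assume "p \<in> {0 + (r - w)..<r' + (r - w)}" "c \<in> {0..<r'}"
    then have "p < r" "c < r'"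
      using assms(1,2) by auto
    then show "AIR m n (p + Q * n) (c + q * r) = AIR r r' p c"
      by (rule AIR_lower_right)
  qed
  moreover have "0 + (r - w) + Q * n = m - w" "r' + (r - w) + Q * n = m - w + r'"
    "0 + q * r = q * r" "r' + q * r = n"
    using m_eq n_eq assms(2) by auto
  ultimately show ?thesis
    by simp
qed

lemma lower_corner_large_block_inj:
  assumes "r' < w" "w \<le> r"
    and right: "block_inj (AIR m n :: nat \<Rightarrow> nat \<Rightarrow> 'a) {m - w..<m - w + r'} {q * r..<n}"
  shows "block_inj (AIR m n :: nat \<Rightarrow> nat \<Rightarrow> 'a::field) {m - w..<m} {n - w..<n}"
proof -
  have "{n - w..<n} = {n - w..<q * r} \<union> {q * r..<n}"
    using assms(1) n_eq by auto
  moreover have "block_inj (AIR m n :: nat \<Rightarrow> nat \<Rightarrow> 'a) {m - w..<m} ({n - w..<q * r} \<union> {q * r..<n})"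
  proof (rule block_inj_triangular[OF _ _ _ _ _ right])
    show "\<forall>p\<in>{m - w..<m - w + r'}. \<forall>c\<in>{n - w..<q * r}. AIR m n p c = 0"
    proof (intro ballI)
      fix p c assume p: "p \<in> {m - w..<m - w + r'}" and c: "c \<in> {n - w..<q * r}"
      then have "AIR m n (Q * n + (p - Q * n)) c = 0"
        using m_eq n_eq assms(2) by (intro AIR_lower_left_zero) auto
      moreover have "Q * n + (p - Q * n) = p"
        using p m_eq assms(2) by auto
      ultimately show "AIR m n p c = 0"
        by simp
    qed
    show "\<forall>c\<in>{n - w..<q * r}. \<exists>p\<in>{m - w..<m}. unit_row (AIR m n) {n - w..<q * r} p c"
    proof
      fix c assume c: "c \<in> {n - w..<q * r}"
      have "unit_row (AIR m n) {n - w..<q * r} (Q * n + c mod r) c"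
        using c n_eq assms(2) by (intro unit_row_lower_left[where f = "n - w"]) auto
      moreover have "Q * n + c mod r \<in> {m - w..<m}"
        using mod_last_block[OF q_pos, of r c] c n_eq m_eq assms(2) r_pos by auto
      ultimately show "\<exists>p\<in>{m - w..<m}. unit_row (AIR m n) {n - w..<q * r} p c"
        by blast
    qed
  qed (use assms(1,2) m_eq in auto)
  ultimately show ?thesis
    by simp
qed

lemma lower_corner_block_inj:
  assumes "w \<le> r"
    and IH: "0 < r' \<Longrightarrow> corners_inj (AIR r r' :: nat \<Rightarrow> nat \<Rightarrow> 'a) r r'
      \<and> windows_inj (AIR r r' :: nat \<Rightarrow> nat \<Rightarrow> 'a) r r'"
  shows "block_inj (AIR m n :: nat \<Rightarrow> nat \<Rightarrow> 'a::field) {m - w..<m} {n - w..<n}"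
proof (cases "w \<le> r'")
  case True
  then show ?thesis
    using lower_corner_small_block_inj IH by (cases "w = 0") auto
next
  case False
  then have "block_inj (AIR m n :: nat \<Rightarrow> nat \<Rightarrow> 'a) {m - w..<m - w + r'} {q * r..<n}"
    using lower_right_window_block_inj[OF _ assms(1)] IH n_eq by (cases "r' = 0") auto
  then show ?thesis
    by (rule lower_corner_large_block_inj[rotated 2]) (use False assms(1) in auto)
qed

lemma ex_unit_row_last_upper:
  assumes "Q * n - n + c \<in> W" "c < n" "C \<subseteq> {..<n}"
  shows "\<exists>p\<in>W. unit_row (AIR m n) C p c"
  using last_upper_row[OF assms(2) Q_pos] assms by (intro ex_unit_row_upper) auto

lemma corners_inj_step:
  assumes IH: "0 < r' \<Longrightarrow> corners_inj (AIR r r' :: nat \<Rightarrow> nat \<Rightarrow> 'a) r r'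
      \<and> windows_inj (AIR r r' :: nat \<Rightarrow> nat \<Rightarrow> 'a) r r'"
  shows "corners_inj (AIR m n :: nat \<Rightarrow> nat \<Rightarrow> 'a::field) m n"
  unfolding corners_inj_def
proof (intro allI impI)
  fix w assume "w \<le> n"
  show "block_inj (AIR m n :: nat \<Rightarrow> nat \<Rightarrow> 'a) {m - w..<m} {n - w..<n}"
  proof (cases "w \<le> r")
    case True
    then show ?thesis
      using lower_corner_block_inj IH by blast
  next
    case False
    show ?thesis
    proof (rule block_inj_eliminate_unit_rows[where R = "{n - w + r..<n}" and W' = "{Q * n..<m}"])
      show "\<forall>c\<in>{n - w + r..<n}. \<exists>p\<in>{m - w..<m}. unit_row (AIR m n) {n - w..<n} p c"
      proof
        fix c assume "c \<in> {n - w + r..<n}"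
        then have c: "n - w + r \<le> c" "c < n"
          by auto
        then have "m - w \<le> Q * n - n + c" "Q * n - n + c < m"
          using \<open>w \<le> n\<close> m_eq n_le_Qn by linarith+
        then show "\<exists>p\<in>{m - w..<m}. unit_row (AIR m n) {n - w..<n} p c"
          using c by (intro ex_unit_row_last_upper) auto
      qed
      have "{n - w..<n} - {n - w + r..<n} = {n - w..<n - w + r}"
        using False \<open>w \<le> n\<close> by auto
      moreover have "n - w + r \<le> n"
        using False r_less by linarith
      ultimately show "block_inj (AIR m n) {Q * n..<m} ({n - w..<n} - {n - w + r..<n})"
        using lower_rows_block_inj[of "n - w"] by simp
    qed (use False m_eq in auto)
  qed
qed

lemma window_upper_block_inj:
  assumes "j + n \<le> Q * n"
  shows "block_inj (AIR m n) (cyc_window m j n) {..<n}"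
proof (rule block_inj_unit_rows)
  show "\<forall>c\<in>{..<n}. \<exists>p\<in>cyc_window m j n. unit_row (AIR m n) {..<n} p c"
  proof
    fix c assume "c \<in> {..<n}"
    define \<tau> where "\<tau> = (c + n - j mod n) mod n"
    have "\<tau> < n"
      using n_pos unfolding \<tau>_def by simp
    then have "j + \<tau> \<in> cyc_window m j n" "j + \<tau> < Q * n"
      using assms m_eq by (auto intro: cyc_windowI)
    moreover have "(j + \<tau>) mod n = c"
      using add_mod_offset \<open>c \<in> {..<n}\<close> unfolding \<tau>_def by simp
    ultimately show "\<exists>p\<in>cyc_window m j n. unit_row (AIR m n) {..<n} p c"
      by (intro ex_unit_row_upper) auto
  qed
qed simp

lemma window_crossing_block_inj:
  assumes "j < Q * n" "Q * n < j + n" "j + n \<le> m"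
  shows "block_inj (AIR m n) (cyc_window m j n) {..<n}"
proof -
  define w where "w = j + n - Q * n"
  have "w \<le> r"
    using assms m_eq unfolding w_def by linarith
  show ?thesis
  proof (rule block_inj_eliminate_unit_rows[where R = "{w..<n}" and W' = "{Q * n..<Q * n + w}"])
    show "\<forall>c\<in>{w..<n}. \<exists>p\<in>cyc_window m j n. unit_row (AIR m n) {..<n} p c"
      using assms m_eq n_le_Qn unfolding w_def
      by (intro ballI ex_unit_row_last_upper cyc_windowI) auto
    show "{Q * n..<Q * n + w} \<subseteq> cyc_window m j n"
      using assms unfolding w_def by (auto intro: cyc_windowI)
    have "{..<n} - {w..<n} = {..<w}"
      using \<open>w \<le> r\<close> r_less by auto
    then show "block_inj (AIR m n) {Q * n..<Q * n + w} ({..<n} - {w..<n})"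
      using lower_left_block_inj[OF \<open>w \<le> r\<close>] by simp
  qed (use \<open>w \<le> r\<close> r_less in auto)
qed

lemma window_wrapping_block_inj:
  assumes "j < Q * n" "m < j + n"
  shows "block_inj (AIR m n) (cyc_window m j n) {..<n}"
proof -
  define f where "f = j + n - m"
  have f: "f + r \<le> n" "f + r = j + n - Q * n"
    using assms m_eq unfolding f_def by auto
  show ?thesis
  proof (rule block_inj_eliminate_unit_rows[where R = "{..<f} \<union> {f + r..<n}" and W' = "{Q * n..<m}"])
    show "\<forall>c\<in>{..<f} \<union> {f + r..<n}. \<exists>p\<in>cyc_window m j n. unit_row (AIR m n) {..<n} p c"
    proof
      fix c assume "c \<in> {..<f} \<union> {f + r..<n}"
      then consider "c < f" | "f + r \<le> c" "c < n"
        by auto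
      then show "\<exists>p\<in>cyc_window m j n. unit_row (AIR m n) {..<n} p c"
      proof cases
        case 1
        then have "c < m" "c + m < j + n" "c < Q * n"
          using assms f m_eq n_le_Qn unfolding f_def by linarith+
        then have "c \<in> cyc_window m j n" "c < Q * n" "c mod n = c"
          using assms(1) m_eq r_less by (auto intro: cyc_window_wrapI)
        then show ?thesis
          by (intro ex_unit_row_upper) auto
      next
        case 2
        then show ?thesis
          using assms f m_eq n_le_Qn by (intro ex_unit_row_last_upper cyc_windowI) auto
      qed
    qed
    show "{Q * n..<m} \<subseteq> cyc_window m j n"
      using assms by (auto intro: cyc_windowI)
    have "{..<n} - ({..<f} \<union> {f + r..<n}) = {f..<f + r}"
      using f by auto
    then show "block_inj (AIR m n) {Q * n..<m} ({..<n} - ({..<f} \<union> {f + r..<n}))"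
      using lower_rows_block_inj[OF f(1)] by simp
  qed (use f in auto)
qed

lemma window_lower_block_inj:
  assumes "Q * n \<le> j" "j < m"
    and IH: "0 < r' \<Longrightarrow> corners_inj (AIR r r' :: nat \<Rightarrow> nat \<Rightarrow> 'a) r r'
      \<and> windows_inj (AIR r r' :: nat \<Rightarrow> nat \<Rightarrow> 'a) r r'"
  shows "block_inj (AIR m n :: nat \<Rightarrow> nat \<Rightarrow> 'a::field) (cyc_window m j n) {..<n}"
proof -
  define w where "w = m - j"
  have w: "w \<le> r" "j = m - w"
    using assms m_eq unfolding w_def by auto
  show ?thesis
  proof (rule block_inj_eliminate_unit_rows[where R = "{..<n - w}" and W' = "{m - w..<m}"])
    show "\<forall>c\<in>{..<n - w}. \<exists>p\<in>cyc_window m j n. unit_row (AIR m n) {..<n} p c"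
    proof
      fix c assume "c \<in> {..<n - w}"
      then have c: "c < n - w"
        by simp
      then have "c < m" "c + m < j + n" "c < Q * n" "c < n"
        using assms w n_le_Qn n_le_m by linarith+
      then have "c \<in> cyc_window m j n" "c < Q * n" "c mod n = c"
        using assms(2) by (auto intro: cyc_window_wrapI)
      then show "\<exists>p\<in>cyc_window m j n. unit_row (AIR m n) {..<n} p c"
        by (intro ex_unit_row_upper) auto
    qed
    show "{m - w..<m} \<subseteq> cyc_window m j n"
    proof
      fix p assume "p \<in> {m - w..<m}"
      then show "p \<in> cyc_window m j n"
        using w r_less n_le_m by (intro cyc_windowI) auto
    qed
    have "{..<n} - {..<n - w} = {n - w..<n}"
      by auto
    then show "block_inj (AIR m n :: nat \<Rightarrow> nat \<Rightarrow> 'a) {m - w..<m} ({..<n} - {..<n - w})"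
      using lower_corner_block_inj[OF w(1) IH] by simp
  qed auto
qed

lemma windows_inj_step:
  assumes IH: "0 < r' \<Longrightarrow> corners_inj (AIR r r' :: nat \<Rightarrow> nat \<Rightarrow> 'a) r r'
      \<and> windows_inj (AIR r r' :: nat \<Rightarrow> nat \<Rightarrow> 'a) r r'"
  shows "windows_inj (AIR m n :: nat \<Rightarrow> nat \<Rightarrow> 'a::field) m n"
  unfolding windows_inj_def
proof (intro allI impI)
  fix j assume "j < m"
  consider "j + n \<le> Q * n" | "j < Q * n" "Q * n < j + n" "j + n \<le> m"
    | "j < Q * n" "m < j + n" | "Q * n \<le> j"
    by linarith
  then show "block_inj (AIR m n :: nat \<Rightarrow> nat \<Rightarrow> 'a) (cyc_window m j n) {..<n}"
    by cases (use window_upper_block_inj window_crossing_block_inj window_wrapping_block_inj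
        window_lower_block_inj[OF _ \<open>j < m\<close> IH] in auto)
qed

end

lemma AIR_corners_windows_inj:
  "0 < n \<Longrightarrow> n \<le> m \<Longrightarrow>
    corners_inj (AIR m n :: nat \<Rightarrow> nat \<Rightarrow> 'a::field) m n \<and> windows_inj (AIR m n :: nat \<Rightarrow> nat \<Rightarrow> 'a) m n"
proof (induction m arbitrary: n rule: less_induct)
  case (less m n)
  show ?case
  proof (cases "m mod n = 0")
    case True
    have Q: "1 \<le> m div n"
      using less.prems by (simp add: div_greater_zero_iff Suc_le_eq)
    have m: "m = m div n * n"
      using True by (metis add_0_right div_mult_mod_eq)
    show ?thesis
      using AIR_corners_inj_dvd[OF less.prems(1) m Q] AIR_windows_inj_dvd[OF less.prems(1) m] by (rule conjI)
  next
    case False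
    interpret air_division m n "m div n" "m mod n" "n div (m mod n)" "n mod (m mod n)"
      using less.prems False by unfold_locales (auto simp: mult.commute)
    have "m mod n < m"
      using r_less n_le_m by linarith
    then have IH: "0 < n mod (m mod n) \<Longrightarrow>
        corners_inj (AIR (m mod n) (n mod (m mod n)) :: nat \<Rightarrow> nat \<Rightarrow> 'a) (m mod n) (n mod (m mod n)) \<and>
        windows_inj (AIR (m mod n) (n mod (m mod n)) :: nat \<Rightarrow> nat \<Rightarrow> 'a) (m mod n) (n mod (m mod n))"
      using less.IH[OF _ _ less_imp_le[OF r'_less]] by blast
    show ?thesis
      using corners_inj_step[OF IH] windows_inj_step[OF IH] by (rule conjI)
  qed
qed

text \<open>\<open>\<alpha>\<close> selects row \<open>s\<^sub>0\<close> within the window of \<open>n\<close> cyclically consecutive rows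
  ending \<open>e\<close> rows after \<open>s\<^sub>0\<close>; only the \<open>m - n\<close> rows following that window can
  pick up anything else.\<close>

lemma AIR_decoding_vector:
  fixes m n s0 e :: nat
  assumes "0 < n" "n \<le> m" "s0 < m" "e < n"
  obtains \<alpha> :: "nat \<Rightarrow> 'a::{field,finite}" where
    "(\<Sum>t<n. AIR m n s0 t * \<alpha> t) = 1"
    "\<And>s. s < m \<Longrightarrow> (\<Sum>t<n. AIR m n s t * \<alpha> t) \<noteq> 0 \<Longrightarrow>
      s = s0 \<or> (\<exists>\<mu><m - n. s = (s0 + e + 1 + \<mu>) mod m)"
proof -
  define j where "j = (s0 + e + 1 + (m - n)) mod m"
  define \<tau>0 where "\<tau>0 = n - e - 1"
  have "j < m" "\<tau>0 < n"
    using assms unfolding j_def \<tau>0_def by auto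
  have "(j + \<tau>0) mod m = (s0 + e + 1 + (m - n) + \<tau>0) mod m"
    unfolding j_def by (simp add: mod_add_left_eq)
  then have "(j + \<tau>0) mod m = s0"
    using assms unfolding \<tau>0_def by simp
  have after: "(j + n + \<mu>) mod m = (s0 + e + 1 + \<mu>) mod m" for \<mu>
  proof -
    have "(j + n + \<mu>) mod m = (s0 + e + 1 + (m - n) + (n + \<mu>)) mod m"
      unfolding j_def by (metis add.assoc mod_add_left_eq)
    also have "s0 + e + 1 + (m - n) + (n + \<mu>) = s0 + e + 1 + \<mu> + m"
      using assms(2) by simp
    finally show ?thesis
      by (metis mod_add_self2)
  qed
  have inj: "block_inj (AIR m n :: nat \<Rightarrow> nat \<Rightarrow> 'a) (cyc_window m j n) {..<n}"
    using AIR_corners_windows_inj[OF assms(1,2)] \<open>j < m\<close> unfolding windows_inj_def by blast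
  obtain \<alpha> :: "nat \<Rightarrow> 'a" where
    \<alpha>: "\<forall>p\<in>cyc_window m j n. (\<Sum>t<n. AIR m n p t * \<alpha> t) = (if p = s0 then 1 else 0)"
    using block_inj_solvable[OF inj, of "\<lambda>p. if p = s0 then 1 else 0"]
      card_cyc_window[OF assms(2)] by (auto simp: cyc_window_def)
  show thesis
  proof (rule that)
    show "(\<Sum>t<n. AIR m n s0 t * \<alpha> t) = 1"
      using \<alpha> \<open>(j + \<tau>0) mod m = s0\<close> \<open>\<tau>0 < n\<close> unfolding cyc_window_def by force
  next
    fix s assume "s < m" and nonzero: "(\<Sum>t<n. AIR m n s t * \<alpha> t) \<noteq> 0"
    from cyc_window_or_after[OF \<open>s < m\<close> assms(2), of j]
    show "s = s0 \<or> (\<exists>\<mu><m - n. s = (s0 + e + 1 + \<mu>) mod m)"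
    proof
      assume "s \<in> cyc_window m j n"
      then show ?thesis
        using \<alpha> nonzero by (auto split: if_splits)
    next
      assume "\<exists>\<mu><m - n. s = (j + n + \<mu>) mod m"
      then show ?thesis
        using after by auto
    qed
  qed
qed

section \<open>Decoding\<close>

lemma finite_side_info: "finite (side_info K D U k)"
proof -
  have "finite {t::nat. 1 \<le> t \<and> t \<le> U}" "finite {t::nat. 1 \<le> t \<and> t \<le> D}"
    by (auto intro: finite_subset[of _ "{..U}"] finite_subset[of _ "{..D}"])
  then show ?thesis
    unfolding side_info_def by simp
qed

lemma mod_offset_in_side_info:
  assumes "d \<noteq> 0" "- int U \<le> d" "d \<le> int D"
  shows "nat ((int k + d) mod int K) \<in> side_info K D U k"
proof (cases "0 < d")
  case True
  then have "nat ((int k + d) mod int K) = (k + nat d) mod K"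
    by (simp add: nat_mod_distrib nat_add_distrib)
  then show ?thesis
    using True assms(3) unfolding side_info_def by auto
next
  case False
  then have "int k + d = int k - int (nat (- d))" "1 \<le> nat (- d)" "nat (- d) \<le> U"
    using assms(1,2) by auto
  then show ?thesis
    unfolding side_info_def by (metis (mono_tags, lifting) UnI1 mem_Collect_eq)
qed

lemma block_offset_bounds:
  fixes a e w j j' :: int
  assumes "1 \<le> e" "e \<le> w" "0 \<le> j" "j < a" "0 \<le> j'" "j' < a"
  shows "1 \<le> a * e + j - j'" "a * e + j - j' < a * (w + 1)"
proof -
  have "a \<le> a * e" "a * e \<le> a * w"
    using assms by (simp_all add: mult_left_mono)
  moreover have "a * (w + 1) = a * w + a"
    by (simp add: algebra_simps)
  ultimately show "1 \<le> a * e + j - j'" "a * e + j - j' < a * (w + 1)"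
    using assms by linarith+
qed

locale two_sided_problem =
  fixes K D U :: nat
  assumes U_le_D: "U \<le> D" and K_large: "U + D + 2 \<le> K"
begin

abbreviation "a \<equiv> par_a K D U"
abbreviation "u \<equiv> u_a K D U"
abbreviation "\<Delta> \<equiv> Delta_a K D U"
abbreviation "m \<equiv> K_a K D U"
abbreviation "n \<equiv> m - \<Delta>"

lemma a_pos: "0 < a"
  unfolding par_a_def by simp

lemma a_u: "a * u = U + 1"
  unfolding u_a_def par_a_def by (meson dvd_mult_div_cancel dvd_trans gcd_dvd1 gcd_dvd2)

lemma a_\<Delta>: "a * \<Delta> = D - U"
  unfolding Delta_a_def par_a_def by (meson dvd_mult_div_cancel dvd_trans gcd_dvd1 gcd_dvd2)

lemma a_m: "a * m = K"
  unfolding K_a_def par_a_def by simp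

lemma \<Delta>_less_m: "\<Delta> < m"
proof -
  have "a * \<Delta> < a * m"
    using a_\<Delta> a_m K_large by linarith
  then show ?thesis
    by simp
qed

lemma a_n: "a * n = K - D + U"
  using a_\<Delta> a_m K_large U_le_D by (simp add: diff_mult_distrib2)

lemma n_pos: "0 < n"
  using \<Delta>_less_m by simp

lemma u_le_n: "u \<le> n"
proof -
  have "a * u \<le> a * n"
    using a_u a_n K_large by linarith
  then show ?thesis
    using a_pos by simp
qed

definition side_form :: "nat \<Rightarrow> ((nat \<Rightarrow> nat \<Rightarrow> 'a::field) \<Rightarrow> 'a) \<Rightarrow> bool" where
  "side_form k f \<longleftrightarrow> (\<exists>\<beta>. \<forall>x. f x = (\<Sum>j\<in>side_info K D U k. \<Sum>l\<in>{1..u}. \<beta> j l * x j l))"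

lemma lin_decodableI:
  assumes "\<And>i. i \<in> {1..u} \<Longrightarrow>
    \<exists>\<alpha>. side_form k (\<lambda>x::nat \<Rightarrow> nat \<Rightarrow> 'a. x k i - (\<Sum>t<n. \<alpha> t * code_sym K D U x t))"
  shows "lin_decodable TYPE('a::field) K D U k"
  unfolding lin_decodable_def
proof
  fix i assume "i \<in> {1..u}"
  then obtain \<alpha> \<beta> where eq: "\<And>x::nat \<Rightarrow> nat \<Rightarrow> 'a. x k i - (\<Sum>t<n. \<alpha> t * code_sym K D U x t)
      = (\<Sum>j\<in>side_info K D U k. \<Sum>l\<in>{1..u}. \<beta> j l * x j l)"
    using assms unfolding side_form_def by blast
  have "x k i = (\<Sum>t<n. \<alpha> t * code_sym K D U x t)
      + (\<Sum>j\<in>side_info K D U k. \<Sum>l\<in>{1..u}. \<beta> j l * x j l)" for x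
    using eq[of x] by (simp add: diff_eq_eq add.commute)
  then show "\<exists>(\<alpha>::nat \<Rightarrow> 'a) \<beta>. \<forall>x. x k i = (\<Sum>t<n. \<alpha> t * code_sym K D U x t)
      + (\<Sum>j\<in>side_info K D U k. \<Sum>l\<in>{1..u}. \<beta> j l * x j l)"
    by blast
qed

lemma side_form_zero: "side_form k (\<lambda>x. 0)"
  unfolding side_form_def by (rule exI[of _ "\<lambda>_ _. 0"]) simp

lemma side_form_add:
  assumes "side_form k f" "side_form k g"
  shows "side_form k (\<lambda>x. f x + g x)"
proof -
  obtain \<beta> \<gamma> where "\<forall>x. f x = (\<Sum>j\<in>side_info K D U k. \<Sum>l\<in>{1..u}. \<beta> j l * x j l)"
    "\<forall>x. g x = (\<Sum>j\<in>side_info K D U k. \<Sum>l\<in>{1..u}. \<gamma> j l * x j l)"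
    using assms unfolding side_form_def by blast
  then show ?thesis
    unfolding side_form_def
    by (intro exI[of _ "\<lambda>j l. \<beta> j l + \<gamma> j l"]) (simp add: distrib_right sum.distrib)
qed

lemma side_form_scale:
  assumes "side_form k f"
  shows "side_form k (\<lambda>x. c * f x)"
proof -
  obtain \<beta> where "\<forall>x. f x = (\<Sum>j\<in>side_info K D U k. \<Sum>l\<in>{1..u}. \<beta> j l * x j l)"
    using assms unfolding side_form_def by blast
  then show ?thesis
    unfolding side_form_def
    by (intro exI[of _ "\<lambda>j l. c * \<beta> j l"]) (simp add: sum_distrib_left mult.assoc)
qed

lemma side_form_uminus:
  assumes "side_form k f"
  shows "side_form k (\<lambda>x. - f x)"
  using side_form_scale[OF assms, of "- 1"] by simp

lemma side_form_diff:
  assumes "side_form k f" "side_form k g"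
  shows "side_form k (\<lambda>x. f x - g x)"
  using side_form_add[OF assms(1) side_form_scale[OF assms(2), of "- 1"]] by simp

lemma side_form_sum:
  assumes "finite S" "\<And>s. s \<in> S \<Longrightarrow> side_form k (f s)"
  shows "side_form k (\<lambda>x. \<Sum>s\<in>S. f s x)"
  using assms by (induction S rule: finite_induct) (simp_all add: side_form_zero side_form_add)

lemma side_form_var:
  assumes "j \<in> side_info K D U k" "l \<in> {1..u}"
  shows "side_form k (\<lambda>x. x j l)"
  unfolding side_form_def
proof (intro exI allI)
  fix x :: "nat \<Rightarrow> nat \<Rightarrow> 'a"
  have "(\<Sum>j'\<in>side_info K D U k. \<Sum>l'\<in>{1..u}. (if j' = j \<and> l' = l then 1 else 0) * x j' l')
      = (\<Sum>p\<in>side_info K D U k \<times> {1..u}. if p = (j, l) then x j l else 0)"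
    unfolding sum.cartesian_product by (intro sum.cong) (auto split: if_splits)
  also have "\<dots> = x j l"
    using assms finite_side_info by simp
  finally show "x j l = (\<Sum>j'\<in>side_info K D U k. \<Sum>l'\<in>{1..u}. (if j' = j \<and> l' = l then 1 else 0) * x j' l')"
    by simp
qed

lemma y_index_offset:
  "nat ((int a * (int ((k div a + e) mod m) + 1 - int i') + int j') mod int K)
    = nat ((int k + (int a * (int e + 1 - int i') + int j' - int (k mod a))) mod int K)"
proof -
  define N where "N = k div a + e"
  have k: "int k = int a * int (k div a) + int (k mod a)"
    by (metis div_mult_mod_eq mult.commute of_nat_add of_nat_mult)
  have N: "int (N mod m) = int N - int m * int (N div m)"
    by (metis add_diff_cancel_left' div_mult_mod_eq mult.commute of_nat_add of_nat_mult)
  have K: "int K = int a * int m"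
    using a_m by (metis of_nat_mult)
  have "int a * (int (N mod m) + 1 - int i') + int j'
      = (int k + (int a * (int e + 1 - int i') + int j' - int (k mod a))) + int K * (- int (N div m))"
    unfolding N K by (subst k) (simp add: N_def algebra_simps)
  then show ?thesis
    unfolding N_def[symmetric] by (simp only: mod_mult_self2)
qed

lemma own_term_in_side_info:
  assumes "i \<in> {1..u}" "i' \<in> {1..u}" "j' < a" "(i', j') \<noteq> (i, k mod a)"
  shows "nat ((int k + (int a * (int i - int i') + int j' - int (k mod a))) mod int K) \<in> side_info K D U k"
proof -
  define d where "d = int a * (int i - int i') + int j' - int (k mod a)"
  have au: "int a * int u = int U + 1"
    using a_u by (metis of_nat_1 of_nat_add of_nat_mult)
  have "k mod a < a"
    using a_pos by simp
  consider "i' < i" | "i' = i" | "i < i'"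
    by linarith
  then have "d \<noteq> 0 \<and> \<bar>d\<bar> \<le> int U"
  proof cases
    case 1
    then have "1 \<le> d" "d < int a * (int u - 1 + 1)"
      using block_offset_bounds[of "int i - int i'" "int u - 1" "int j'" "int a" "int (k mod a)"]
        assms \<open>k mod a < a\<close> unfolding d_def by auto
    then show ?thesis
      using au by auto
  next
    case 2
    have "a \<le> a * u"
      using assms(1) by simp
    then have "int a \<le> int U + 1"
      using a_u by linarith
    have "d = int j' - int (k mod a)" "j' \<noteq> k mod a"
      using 2 assms(4) unfolding d_def by auto
    moreover have "d \<le> int U" "- d \<le> int U"
      using calculation(1) \<open>int a \<le> int U + 1\<close> assms(3) \<open>k mod a < a\<close> by linarith+
    ultimately show ?thesis
      by (simp add: abs_le_iff)
  next
    case 3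
    then have "1 \<le> - d" "- d < int a * (int u - 1 + 1)"
      using block_offset_bounds[of "int i' - int i" "int u - 1" "int (k mod a)" "int a" "int j'"]
        assms \<open>k mod a < a\<close> unfolding d_def by (auto simp: algebra_simps)
    then show ?thesis
      using au by auto
  qed
  then show ?thesis
    using mod_offset_in_side_info[of d U D k K] U_le_D unfolding d_def by auto
qed

lemma after_term_in_side_info:
  assumes "\<mu> < \<Delta>" "i' \<in> {1..u}" "j' < a"
  shows "nat ((int k + (int a * (int (u + \<mu>) + 1 - int i') + int j' - int (k mod a))) mod int K)
    \<in> side_info K D U k"
proof -
  define d where "d = int a * (int (u + \<mu>) + 1 - int i') + int j' - int (k mod a)"
  have aD: "int a * (int u + int \<Delta>) = int D + 1"
    using a_u a_\<Delta> U_le_D by (simp add: algebra_simps flip: of_nat_mult)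
  have "k mod a < a"
    using a_pos by simp
  then have "1 \<le> d" "d < int a * (int u + int \<Delta> - 1 + 1)"
    using block_offset_bounds[of "int (u + \<mu>) + 1 - int i'" "int u + int \<Delta> - 1" "int j'" "int a" "int (k mod a)"]
      assms unfolding d_def by auto
  then show ?thesis
    using mod_offset_in_side_info[of d U D k K] aD unfolding d_def by auto
qed

lemma side_form_y_after:
  assumes "\<mu> < \<Delta>"
  shows "side_form k (\<lambda>x. y_sym K D U x ((k div a + (u + \<mu>)) mod m))"
  unfolding y_sym_def y_index_offset
  using after_term_in_side_info[OF assms] by (intro side_form_sum side_form_var) auto

lemma side_form_y_own:
  assumes "k < K" "i \<in> {1..u}"
  shows "side_form k (\<lambda>x. y_sym K D U x ((k div a + (i - 1)) mod m) - x k i)"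
proof -
  define g where "g i' j' = nat ((int k + (int a * (int i - int i') + int j' - int (k mod a))) mod int K)"
    for i' j'
  define T where "T = {1..u} \<times> {..<a}"
  have y: "y_sym K D U x ((k div a + (i - 1)) mod m) = (\<Sum>p\<in>T. x (g (fst p) (snd p)) (fst p))" for x
    unfolding y_sym_def y_index_offset T_def g_def sum.cartesian_product split_def
    using assms(2) by (simp add: of_nat_diff)
  have "finite T" "(i, k mod a) \<in> T" "g i (k mod a) = k"
    using assms a_pos unfolding T_def g_def by auto
  then have "y_sym K D U x ((k div a + (i - 1)) mod m) - x k i
      = (\<Sum>p\<in>T - {(i, k mod a)}. x (g (fst p) (snd p)) (fst p))" for x :: "nat \<Rightarrow> nat \<Rightarrow> 'a"
    unfolding y using sum.remove[of T "(i, k mod a)" "\<lambda>p. x (g (fst p) (snd p)) (fst p)"] by simp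
  then have "(\<lambda>x. y_sym K D U x ((k div a + (i - 1)) mod m) - x k i)
      = (\<lambda>x :: nat \<Rightarrow> nat \<Rightarrow> 'a. \<Sum>p\<in>T - {(i, k mod a)}. x (g (fst p) (snd p)) (fst p))"
    by (intro ext)
  moreover have "side_form k (\<lambda>x :: nat \<Rightarrow> nat \<Rightarrow> 'a. \<Sum>p\<in>T - {(i, k mod a)}. x (g (fst p) (snd p)) (fst p))"
  proof (intro side_form_sum side_form_var)
    fix p assume p: "p \<in> T - {(i, k mod a)}"
    obtain i' j' where "p = (i', j')"
      by fastforce
    then show "g (fst p) (snd p) \<in> side_info K D U k" "fst p \<in> {1..u}"
      using p own_term_in_side_info[OF assms(2), of i' j' k] unfolding T_def g_def by auto
  qed (simp add: \<open>finite T\<close>)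
  ultimately show ?thesis
    by (simp only:)
qed

lemma code_combination:
  assumes "s0 < m" "(\<Sum>t<n. AIR m n s0 t * \<alpha> t) = 1"
  shows "(\<Sum>t<n. \<alpha> t * code_sym K D U x t) = y_sym K D U x s0
    + (\<Sum>s\<in>{..<m} - {s0}. (\<Sum>t<n. AIR m n s t * \<alpha> t) * y_sym K D U x s)"
proof -
  have "(\<Sum>t<n. \<alpha> t * code_sym K D U x t) = (\<Sum>t<n. \<Sum>s<m. AIR m n s t * \<alpha> t * y_sym K D U x s)"
    unfolding code_sym_def by (simp add: sum_distrib_left mult_ac)
  also have "\<dots> = (\<Sum>s<m. (\<Sum>t<n. AIR m n s t * \<alpha> t) * y_sym K D U x s)"
    by (subst sum.swap) (simp add: sum_distrib_right)
  also have "\<dots> = y_sym K D U x s0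
      + (\<Sum>s\<in>{..<m} - {s0}. (\<Sum>t<n. AIR m n s t * \<alpha> t) * y_sym K D U x s)"
    using sum.remove[of "{..<m}" s0 "\<lambda>s. (\<Sum>t<n. AIR m n s t * \<alpha> t) * y_sym K D U x s"] assms
    by simp
  finally show ?thesis .
qed

lemma receiver_decodes:
  assumes "k < K"
  shows "lin_decodable TYPE('a::{field,finite}) K D U k"
proof (rule lin_decodableI)
  fix i assume i: "i \<in> {1..u}"
  define s0 where "s0 = (k div a + (i - 1)) mod m"
  have "s0 < m" "u - i < n"
    using \<Delta>_less_m u_le_n i unfolding s0_def by auto
  obtain \<alpha> :: "nat \<Rightarrow> 'a" where \<alpha>_s0: "(\<Sum>t<n. AIR m n s0 t * \<alpha> t) = 1"
    and \<alpha>_supp: "\<And>s. s < m \<Longrightarrow> (\<Sum>t<n. AIR m n s t * \<alpha> t) \<noteq> 0 \<Longrightarrow>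
      s = s0 \<or> (\<exists>\<mu><m - n. s = (s0 + (u - i) + 1 + \<mu>) mod m)"
    using AIR_decoding_vector[OF n_pos _ \<open>s0 < m\<close> \<open>u - i < n\<close>] by auto
  define v where "v s = (\<Sum>t<n. AIR m n s t * \<alpha> t)" for s
  have other_rows: "side_form k (\<lambda>x. v s * y_sym K D U x s)" if row: "s \<in> {..<m} - {s0}" for s
  proof (cases "v s = 0")
    case True
    then show ?thesis
      using side_form_zero by simp
  next
    case False
    then obtain \<mu> where "\<mu> < \<Delta>" and s: "s = (s0 + (u - i) + 1 + \<mu>) mod m"
      using \<alpha>_supp[of s] row \<Delta>_less_m unfolding v_def by auto
    have "s = (k div a + (i - 1) + (u - i + 1 + \<mu>)) mod m"
      unfolding s s0_def by (metis add.assoc mod_add_left_eq)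
    also have "k div a + (i - 1) + (u - i + 1 + \<mu>) = k div a + (u + \<mu>)"
      using i by auto
    finally show ?thesis
      using side_form_scale[OF side_form_y_after[OF \<open>\<mu> < \<Delta>\<close>], where c = "v s"] by simp
  qed
  have "(\<lambda>x :: nat \<Rightarrow> nat \<Rightarrow> 'a. x k i - (\<Sum>t<n. \<alpha> t * code_sym K D U x t))
      = (\<lambda>x. - (y_sym K D U x s0 - x k i) - (\<Sum>s\<in>{..<m} - {s0}. v s * y_sym K D U x s))"
    unfolding v_def by (rule ext) (simp add: code_combination[OF \<open>s0 < m\<close> \<alpha>_s0])
  moreover have "side_form k (\<lambda>x :: nat \<Rightarrow> nat \<Rightarrow> 'a. - (y_sym K D U x s0 - x k i)
      - (\<Sum>s\<in>{..<m} - {s0}. v s * y_sym K D U x s))"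
    using side_form_diff[OF side_form_uminus[OF side_form_y_own[OF assms i, folded s0_def]]
        side_form_sum[where S = "{..<m} - {s0}" and f = "\<lambda>s x. v s * y_sym K D U x s", OF _ other_rows]]
    by simp
  ultimately show "\<exists>\<alpha>. side_form k (\<lambda>x :: nat \<Rightarrow> nat \<Rightarrow> 'a. x k i - (\<Sum>t<n. \<alpha> t * code_sym K D U x t))"
    by (intro exI[of _ \<alpha>]) (simp only:)
qed

end

theorem theorem1:
  fixes K D U :: nat
  assumes "U \<le> D" and "U + D + 2 \<le> K"
  shows "(\<forall>k<K. lin_decodable TYPE('a::{field,finite}) K D U k) \<and>
         0 < K_a K D U - Delta_a K D U \<and>
         real (u_a K D U) / real (K_a K D U - Delta_a K D U)
           = real (U + 1) / real (K - D + U)"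
proof -
  interpret two_sided_problem K D U
    using assms by unfold_locales
  have "real (U + 1) / real (K - D + U)
      = (real (par_a K D U) * real (u_a K D U)) / (real (par_a K D U) * real (K_a K D U - Delta_a K D U))"
    using a_u a_n by (metis of_nat_mult)
  then have "real (u_a K D U) / real (K_a K D U - Delta_a K D U) = real (U + 1) / real (K - D + U)"
    using a_pos by simp
  then show ?thesis
    using receiver_decodes n_pos by blast
qed

end
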